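(* Let $k\ge2$, let $f:(k+1)^V\to\mathbb{R}_{\ge0}$ be non-negative and $k$-submodular with multilinear extension $F$, let $OPT=\max_{S\in(k+1)^V}f(S)$, and let $c>0$. Consider the meta-framework with step $\delta=1/N$, and suppose that at every iteration $t$ the direction $v(t)$ satisfies the following property, where $y=\nabla F(s(t))$ (i.e. $y_{i,j}=\frac{\partial F}{\partial x_{i,j}}(s(t))$): for every $a\in\mathbb{R}^{n\times k}$ with $a_{i,j}+a_{i,j'}\ge 0$ for all $i$ and all $j\neq j'$, and $a_{i,j}\le y_{i,j}$ for all $i,j$, and for every map $j^*:[n]\to[k]$, $$\sum_{i\in[n]}\sum_{j\in[k]}v_{i,j}(t)\big(a_{i,j^*(i)}-a_{i,j}\big)\ \le\ c\sum_{i\in[n]}\sum_{j\in[k]}v_{i,j}(t)\,y_{i,j}.$$ Then for every $\varepsilon>0$ there is $N_0$ (depending on $n,k,c,f,\varepsilon$) such that for all $N\ge N_0$, the output satisfies $s(N)\in\mathcal P$ and $F(s(N))\ge\frac{1}{c+1}OPT-\varepsilon$.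
   Context: Let $V=[n]=\{1,\dots,n\}$ and let $k\ge 1$ be an integer. Write $(k+1)^V$ for the set of $k$-tuples $S=(S_1,\dots,S_k)$ of pairwise disjoint subsets of $V$. For $S,T\in(k+1)^V$ let $S\sqcap T=(S_1\cap T_1,\dots,S_k\cap T_k)$ and let $S\sqcup T$ be the tuple whose $j$-th component is $(S_j\cup T_j)\setminus\bigcup_{l\neq j}(S_l\cup T_l)$. A function $f:(k+1)^V\to\mathbb{R}$ is $k$-submodular if $f(S)+f(T)\ge f(S\sqcap T)+f(S\sqcup T)$ for all $S,T\in(k+1)^V$. Let $\mathcal P=\{x\in[0,1]^{n\times k}:\sum_{j=1}^k x_{i,j}\le 1\ \forall i\in[n]\}$. The multilinear extension of $f$ is the polynomial $F(x)=\sum_{S\in(k+1)^V} f(S_1,\dots,S_k)\Big(\prod_{j\in[k]}\prod_{i\in S_j}x_{i,j}\Big)\prod_{i\in V\setminus\bigcup_j S_j}\Big(1-\sum_{j=1}^k x_{i,j}\Big)$, considered on $\mathcal P$. Meta-framework: fix a positive integer $N$ and $\delta=1/N$. Set $s(0)=0\in\mathbb{R}^{n\times k}$. For $t=0,1,\dots,N-1$, choose a direction $v(t)\in[0,1]^{n\times k}$ with $\sum_{j=1}^k v_{i,j}(t)=1$ for every $i\in[n]$ (the choice may depend on $s(t)$ and on $F$), and set $s(t+1)=s(t)+\delta\,v(t)$. The output is $s(N)$. *)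

theory Defs
  imports "HOL-Analysis.Analysis"
begin

text \<open>A k-tuple (S_1,...,S_k) of pairwise disjoint subsets of V = {1..n} is represented
  as a function S :: nat \<Rightarrow> nat set with S j the j-th component for j in {1..k},
  and S j = {} for j outside {1..k}.\<close>

definition orthants :: "nat \<Rightarrow> nat \<Rightarrow> (nat \<Rightarrow> nat set) set" where
  "orthants n k = {S. (\<forall>j\<in>{1..k}. S j \<subseteq> {1..n})
                     \<and> (\<forall>j. j \<notin> {1..k} \<longrightarrow> S j = {})
                     \<and> (\<forall>j\<in>{1..k}. \<forall>j'\<in>{1..k}. j \<noteq> j' \<longrightarrow> S j \<inter> S j' = {})}"

definition kmeet :: "(nat \<Rightarrow> nat set) \<Rightarrow> (nat \<Rightarrow> nat set) \<Rightarrow> (nat \<Rightarrow> nat set)" where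
  "kmeet S T = (\<lambda>j. S j \<inter> T j)"

definition kjoin :: "nat \<Rightarrow> (nat \<Rightarrow> nat set) \<Rightarrow> (nat \<Rightarrow> nat set) \<Rightarrow> (nat \<Rightarrow> nat set)" where
  "kjoin k S T = (\<lambda>j. if j \<in> {1..k}
       then (S j \<union> T j) - (\<Union>l\<in>{1..k} - {j}. S l \<union> T l) else {})"

definition k_submodular :: "nat \<Rightarrow> nat \<Rightarrow> ((nat \<Rightarrow> nat set) \<Rightarrow> real) \<Rightarrow> bool" where
  "k_submodular n k f = (\<forall>S\<in>orthants n k. \<forall>T\<in>orthants n k.
       f S + f T \<ge> f (kmeet S T) + f (kjoin k S T))"

text \<open>Points of R^{n x k} are functions x :: nat \<Rightarrow> nat \<Rightarrow> real, x i j = x_{i,j};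
  only entries with i in {1..n}, j in {1..k} are relevant.\<close>

definition polytopeP :: "nat \<Rightarrow> nat \<Rightarrow> (nat \<Rightarrow> nat \<Rightarrow> real) set" where
  "polytopeP n k = {x. (\<forall>i\<in>{1..n}. \<forall>j\<in>{1..k}. 0 \<le> x i j \<and> x i j \<le> 1)
                      \<and> (\<forall>i\<in>{1..n}. (\<Sum>j=1..k. x i j) \<le> 1)}"

definition multilinear_ext ::
  "nat \<Rightarrow> nat \<Rightarrow> ((nat \<Rightarrow> nat set) \<Rightarrow> real) \<Rightarrow> (nat \<Rightarrow> nat \<Rightarrow> real) \<Rightarrow> real" where
  "multilinear_ext n k f x = (\<Sum>S\<in>orthants n k. f S
       * (\<Prod>j\<in>{1..k}. \<Prod>i\<in>S j. x i j)
       * (\<Prod>i\<in>{1..n} - (\<Union>j\<in>{1..k}. S j). 1 - (\<Sum>j=1..k. x i j)))"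

definition partial_ij ::
  "((nat \<Rightarrow> nat \<Rightarrow> real) \<Rightarrow> real) \<Rightarrow> (nat \<Rightarrow> nat \<Rightarrow> real) \<Rightarrow> nat \<Rightarrow> nat \<Rightarrow> real" where
  "partial_ij G x i j = deriv (\<lambda>t. G (x(i := (x i)(j := t)))) (x i j)"

primrec traj :: "real \<Rightarrow> (nat \<Rightarrow> nat \<Rightarrow> nat \<Rightarrow> real) \<Rightarrow> nat \<Rightarrow> (nat \<Rightarrow> nat \<Rightarrow> real)" where
  "traj \<delta> v 0 = (\<lambda>i j. 0)"
| "traj \<delta> v (Suc t) = (\<lambda>i j. traj \<delta> v t i j + \<delta> * v t i j)"

definition valid_direction :: "nat \<Rightarrow> nat \<Rightarrow> (nat \<Rightarrow> nat \<Rightarrow> real) \<Rightarrow> bool" where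
  "valid_direction n k w = ((\<forall>i\<in>{1..n}. \<forall>j\<in>{1..k}. 0 \<le> w i j \<and> w i j \<le> 1)
                           \<and> (\<forall>i\<in>{1..n}. (\<Sum>j=1..k. w i j) = 1))"

definition good_direction ::
  "nat \<Rightarrow> nat \<Rightarrow> real \<Rightarrow> (nat \<Rightarrow> nat \<Rightarrow> real) \<Rightarrow> (nat \<Rightarrow> nat \<Rightarrow> real) \<Rightarrow> bool" where
  "good_direction n k c y w =
     (\<forall>a :: nat \<Rightarrow> nat \<Rightarrow> real. \<forall>jstar :: nat \<Rightarrow> nat.
        (\<forall>i\<in>{1..n}. \<forall>j\<in>{1..k}. \<forall>j'\<in>{1..k}. j \<noteq> j' \<longrightarrow> a i j + a i j' \<ge> 0)
      \<longrightarrow> (\<forall>i\<in>{1..n}. \<forall>j\<in>{1..k}. a i j \<le> y i j)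
      \<longrightarrow> (\<forall>i\<in>{1..n}. jstar i \<in> {1..k})
      \<longrightarrow> (\<Sum>i=1..n. \<Sum>j=1..k. w i j * (a i (jstar i) - a i j))
            \<le> c * (\<Sum>i=1..n. \<Sum>j=1..k. w i j * y i j))"

end

theory Submission
  imports Defs
begin

text \<open>The multilinear extension \<open>F\<close> is affine in each row \<open>x i\<close>. Hence \<open>F\<close> agrees with \<open>f\<close> at
  integral points, its partial derivatives are the finite differences \<open>marginal F i j\<close>, and a
  row-affine function that is nonnegative at integral points is nonnegative on \<open>polytopeP n k\<close>.
  In this way \<open>k\<close>-submodularity of \<open>f\<close> becomes pairwise monotonicity and antitonicity of the
  marginals of \<open>F\<close>, which yield first-order bounds for \<open>F\<close> along nonnegative increments, with a
  quadratic error. Since \<open>k \<ge> 2\<close>, some integral point \<open>E\<close> labelling every element has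
  \<open>F E \<ge> OPT\<close>. Along \<open>z t = s t + (1 - t \<delta>) E\<close>, which runs from \<open>E\<close> to \<open>s N\<close>, each
  iteration lowers \<open>F \<circ> z\<close> by at most \<open>c\<close> times the gain of \<open>F \<circ> s\<close> plus \<open>O(\<delta>\<^sup>2)\<close>;
  summing gives \<open>F E - F (s N) \<le> c F (s N) + O(1/N)\<close>.\<close>

definition unit_row :: "nat \<Rightarrow> nat \<Rightarrow> real" where
  "unit_row j = (\<lambda>l. if l = j then 1 else 0)"

definition zero_row :: "nat \<Rightarrow> real" where
  "zero_row = (\<lambda>_. 0)"

lemma unit_row_eq_iff [simp]: "unit_row j = unit_row l \<longleftrightarrow> j = l"
  by (metis unit_row_def zero_neq_one)

lemma unit_row_neq_zero_row [simp]: "unit_row j \<noteq> zero_row" "zero_row \<noteq> unit_row j"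
  by (metis unit_row_def zero_row_def zero_neq_one)+

lemma zero_row_apply: "zero_row l = 0"
  by (simp add: zero_row_def)

lemma sum_unit_row [simp]: "j \<in> {1..k} \<Longrightarrow> (\<Sum>l=1..k. unit_row j l) = 1"
  by (simp add: unit_row_def sum.delta')

lemma finite_orthants: "finite (orthants n k)"
proof -
  have "orthants n k \<subseteq> {S. \<forall>x. (x \<in> {1..k} \<longrightarrow> S x \<in> Pow {1..n}) \<and> (x \<notin> {1..k} \<longrightarrow> S x = {})}"
    by (auto simp: orthants_def)
  then show ?thesis by (rule finite_subset) (rule finite_set_of_finite_funs, auto)
qed

subsection \<open>The multilinear extension is affine in each row\<close>

definition orthant_label :: "nat \<Rightarrow> (nat \<Rightarrow> nat set) \<Rightarrow> nat \<Rightarrow> nat" where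
  "orthant_label k S i = (SOME j. j \<in> {1..k} \<and> i \<in> S j)"

text \<open>The factor contributed by row \<open>i\<close> to the coefficient of \<open>f S\<close> in the multilinear extension.\<close>
definition row_factor :: "nat \<Rightarrow> (nat \<Rightarrow> nat set) \<Rightarrow> nat \<Rightarrow> (nat \<Rightarrow> real) \<Rightarrow> real" where
  "row_factor k S i r =
     (if \<exists>j\<in>{1..k}. i \<in> S j then r (orthant_label k S i) else 1 - (\<Sum>j=1..k. r j))"

lemma orthant_label_mem:
  assumes "j \<in> {1..k}" "i \<in> S j"
  shows "orthant_label k S i \<in> {1..k} \<and> i \<in> S (orthant_label k S i)"
  unfolding orthant_label_def by (rule someI[of _ j]) (use assms in auto)

lemma orthant_label_unique:
  assumes "S \<in> orthants n k" "j \<in> {1..k}" "i \<in> S j"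
  shows "orthant_label k S i = j"
  using orthant_label_mem[of j k i S, OF assms(2,3)] assms unfolding orthants_def by blast

lemma orthant_monomial_eq_prod_row_factor:
  assumes S: "S \<in> orthants n k"
  shows "(\<Prod>j\<in>{1..k}. \<Prod>i\<in>S j. x i j) * (\<Prod>i\<in>{1..n} - (\<Union>j\<in>{1..k}. S j). 1 - (\<Sum>j=1..k. x i j))
     = (\<Prod>i\<in>{1..n}. row_factor k S i (x i))"
proof -
  let ?U = "\<Union>j\<in>{1..k}. S j"
  have U: "?U \<subseteq> {1..n}" using S by (auto simp: orthants_def)
  have fin: "finite (S j)" if "j \<in> {1..k}" for j
    using S that finite_subset[of "S j" "{1..n}"] by (auto simp: orthants_def)
  have "(\<Prod>j\<in>{1..k}. \<Prod>i\<in>S j. x i j) = (\<Prod>j\<in>{1..k}. \<Prod>i\<in>S j. x i (orthant_label k S i))"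
    by (intro prod.cong refl) (simp add: orthant_label_unique[OF S])
  also have "\<dots> = (\<Prod>i\<in>?U. x i (orthant_label k S i))"
    by (rule prod.UNION_disjoint[symmetric]) (use S fin in \<open>auto simp: orthants_def\<close>)
  also have "\<dots> = (\<Prod>i\<in>?U. row_factor k S i (x i))"
    by (rule prod.cong) (auto simp: row_factor_def)
  finally have covered: "(\<Prod>j\<in>{1..k}. \<Prod>i\<in>S j. x i j) = (\<Prod>i\<in>?U. row_factor k S i (x i))" .
  have uncovered: "(\<Prod>i\<in>{1..n} - ?U. 1 - (\<Sum>j=1..k. x i j)) = (\<Prod>i\<in>{1..n} - ?U. row_factor k S i (x i))"
    by (rule prod.cong) (auto simp: row_factor_def)
  show ?thesis
    unfolding covered uncovered using prod.subset_diff[OF U, of "\<lambda>i. row_factor k S i (x i)"] by (simp add: mult.commute)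
qed

lemma multilinear_ext_eq_sum_prod_row_factor:
  "multilinear_ext n k f x = (\<Sum>S\<in>orthants n k. f S * (\<Prod>i\<in>{1..n}. row_factor k S i (x i)))"
  unfolding multilinear_ext_def
proof (rule sum.cong)
  fix S assume "S \<in> orthants n k"
  then show "f S * (\<Prod>j\<in>{1..k}. \<Prod>i\<in>S j. x i j) * (\<Prod>i\<in>{1..n} - (\<Union>j\<in>{1..k}. S j). 1 - (\<Sum>j=1..k. x i j))
     = f S * (\<Prod>i\<in>{1..n}. row_factor k S i (x i))"
    using orthant_monomial_eq_prod_row_factor[of S n k x] by (simp only: mult.assoc)
qed simp

lemma row_factor_affine:
  "row_factor k S i r
     = (\<Sum>j=1..k. r j * row_factor k S i (unit_row j)) + (1 - (\<Sum>j=1..k. r j)) * row_factor k S i zero_row"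
proof (cases "\<exists>j\<in>{1..k}. i \<in> S j")
  case True
  then obtain j0 where j0: "j0 \<in> {1..k}" "i \<in> S j0" by blast
  have label: "orthant_label k S i \<in> {1..k}" using orthant_label_mem[of j0 k i S, OF j0] by blast
  have eval: "row_factor k S i r' = r' (orthant_label k S i)" for r'
    using True by (simp add: row_factor_def)
  have "(\<Sum>j=1..k. r j * row_factor k S i (unit_row j)) = (\<Sum>j=1..k. if j = orthant_label k S i then r j else 0)"
    by (rule sum.cong) (auto simp: eval unit_row_def)
  also have "\<dots> = r (orthant_label k S i)" using label by (simp add: sum.delta)
  finally show ?thesis by (simp add: eval zero_row_def)
next
  case False
  then have eval: "row_factor k S i r' = 1 - (\<Sum>j=1..k. r' j)" for r'
    by (simp add: row_factor_def)
  have "(\<Sum>j=1..k. r j * row_factor k S i (unit_row j)) = 0"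
    by (rule sum.neutral) (auto simp: eval unit_row_def)
  then show ?thesis by (simp add: eval zero_row_def)
qed

text \<open>Affinity in the row \<open>x i\<close>, written as the expansion over the vertices
  \<open>unit_row 1, \<dots>, unit_row k, zero_row\<close> of the row simplex.\<close>
definition row_affine :: "nat \<Rightarrow> nat \<Rightarrow> ((nat \<Rightarrow> nat \<Rightarrow> real) \<Rightarrow> real) \<Rightarrow> bool" where
  "row_affine n k H = (\<forall>i\<in>{1..n}. \<forall>x. H x = (\<Sum>j=1..k. x i j * H (x(i := unit_row j)))
      + (1 - (\<Sum>j=1..k. x i j)) * H (x(i := zero_row)))"

lemma row_affineD:
  "row_affine n k H \<Longrightarrow> i \<in> {1..n} \<Longrightarrow>
     H x = (\<Sum>j=1..k. x i j * H (x(i := unit_row j))) + (1 - (\<Sum>j=1..k. x i j)) * H (x(i := zero_row))"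
  unfolding row_affine_def by blast

lemma row_affine_multilinear_ext: "row_affine n k (multilinear_ext n k f)"
  unfolding row_affine_def
proof (intro ballI allI)
  fix i x assume i: "i \<in> {1..n}"
  define R where "R S = (\<Prod>i'\<in>{1..n}-{i}. row_factor k S i' (x i'))" for S
  have split_row: "multilinear_ext n k f (x(i := r)) = (\<Sum>S\<in>orthants n k. f S * row_factor k S i r * R S)" for r
  proof -
    have "(\<Prod>i'\<in>{1..n}. row_factor k S i' ((x(i := r)) i')) = row_factor k S i r * R S" for S
      unfolding R_def using prod.remove[OF _ i, of "\<lambda>i'. row_factor k S i' ((x(i := r)) i')"]
      by (simp add: prod.cong[of _ _ "\<lambda>i'. row_factor k S i' ((x(i := r)) i')"])
    then show ?thesis unfolding multilinear_ext_eq_sum_prod_row_factor by (simp add: mult.assoc)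
  qed
  have "multilinear_ext n k f x = (\<Sum>S\<in>orthants n k. f S * row_factor k S i (x i) * R S)"
    using split_row[of "x i"] by simp
  also have "\<dots> = (\<Sum>S\<in>orthants n k. (\<Sum>j=1..k. x i j * (f S * row_factor k S i (unit_row j) * R S))
        + (1 - (\<Sum>j=1..k. x i j)) * (f S * row_factor k S i zero_row * R S))"
    by (rule sum.cong, simp, subst row_factor_affine)
      (simp add: algebra_simps sum_distrib_left sum_distrib_right)
  also have "\<dots> = (\<Sum>j=1..k. x i j * (\<Sum>S\<in>orthants n k. f S * row_factor k S i (unit_row j) * R S))
        + (1 - (\<Sum>j=1..k. x i j)) * (\<Sum>S\<in>orthants n k. f S * row_factor k S i zero_row * R S)"
    by (simp add: sum.distrib sum_distrib_left sum.swap[of _ "orthants n k"])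
  finally show "multilinear_ext n k f x = (\<Sum>j=1..k. x i j * multilinear_ext n k f (x(i := unit_row j)))
      + (1 - (\<Sum>j=1..k. x i j)) * multilinear_ext n k f (x(i := zero_row))"
    by (simp add: split_row)
qed

definition marginal ::
  "((nat \<Rightarrow> nat \<Rightarrow> real) \<Rightarrow> real) \<Rightarrow> nat \<Rightarrow> nat \<Rightarrow> (nat \<Rightarrow> nat \<Rightarrow> real) \<Rightarrow> real" where
  "marginal H i j x = H (x(i := unit_row j)) - H (x(i := zero_row))"

lemma row_affine_add:
  assumes H: "row_affine n k H" and G: "row_affine n k G"
  shows "row_affine n k (\<lambda>x. H x + G x)"
  unfolding row_affine_def
proof (intro ballI allI)
  fix i x assume i: "i \<in> {1..n}"
  show "H x + G x = (\<Sum>j=1..k. x i j * (H (x(i := unit_row j)) + G (x(i := unit_row j))))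
      + (1 - (\<Sum>j=1..k. x i j)) * (H (x(i := zero_row)) + G (x(i := zero_row)))"
    using row_affineD[OF H i, of x] row_affineD[OF G i, of x] by (simp only: distrib_left sum.distrib)
qed

lemma row_affine_scale:
  assumes H: "row_affine n k H"
  shows "row_affine n k (\<lambda>x. a * H x)"
  unfolding row_affine_def
proof (intro ballI allI)
  fix i x assume i: "i \<in> {1..n}"
  have pull: "(\<Sum>j=1..k. x i j * (a * H (x(i := unit_row j)))) = a * (\<Sum>j=1..k. x i j * H (x(i := unit_row j)))"
    by (simp add: sum_distrib_left mult.left_commute)
  show "a * H x = (\<Sum>j=1..k. x i j * (a * H (x(i := unit_row j))))
      + (1 - (\<Sum>j=1..k. x i j)) * (a * H (x(i := zero_row)))"
    by (simp only: pull row_affineD[OF H i, of x]) (simp add: algebra_simps)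
qed

lemma row_affine_diff: "row_affine n k H \<Longrightarrow> row_affine n k G \<Longrightarrow> row_affine n k (\<lambda>x. H x - G x)"
  using row_affine_add[of n k H "\<lambda>x. (-1) * G x"] row_affine_scale[of n k G "-1"] by simp

lemma row_affine_const: "row_affine n k (\<lambda>x. a)"
  unfolding row_affine_def by (simp add: algebra_simps sum_distrib_left sum_distrib_right)

lemma row_affine_fun_upd:
  assumes H: "row_affine n k H"
  shows "row_affine n k (\<lambda>x. H (x(i0 := r)))"
  unfolding row_affine_def
proof (intro ballI allI)
  fix i x assume i: "i \<in> {1..n}"
  show "H (x(i0 := r)) = (\<Sum>j = 1..k. x i j * H (x(i := unit_row j, i0 := r))) +
          (1 - (\<Sum>j = 1..k. x i j)) * H (x(i := zero_row, i0 := r))"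
  proof (cases "i = i0")
    case True
    then show ?thesis by (simp add: algebra_simps sum_distrib_right[symmetric])
  next
    case False
    then show ?thesis using row_affineD[OF H i, of "x(i0 := r)"] by (simp add: fun_upd_twist)
  qed
qed

lemma row_affine_marginal: "row_affine n k H \<Longrightarrow> row_affine n k (marginal H i j)"
  unfolding marginal_def[abs_def] by (intro row_affine_diff row_affine_fun_upd)

lemma row_affine_coordinate:
  assumes H: "row_affine n k H" and i: "i \<in> {1..n}" and j: "j \<in> {1..k}"
  shows "H (x(i := (x i)(j := t))) = H x + (t - x i j) * marginal H i j x"
proof -
  let ?y = "x(i := (x i)(j := t))"
  have row: "?y i l = x i l + (if l = j then t - x i j else 0)" for l by simp
  have same_rows: "?y(i := r) = x(i := r)" for r by simp
  have vertices: "(\<Sum>l=1..k. ?y i l * H (x(i := unit_row l)))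
      = (\<Sum>l=1..k. x i l * H (x(i := unit_row l))) + (t - x i j) * H (x(i := unit_row j))"
  proof -
    have "(\<Sum>l=1..k. ?y i l * H (x(i := unit_row l)))
        = (\<Sum>l=1..k. x i l * H (x(i := unit_row l)) + (if l = j then (t - x i j) * H (x(i := unit_row j)) else 0))"
      by (rule sum.cong) (auto simp: row algebra_simps)
    then show ?thesis using j by (simp add: sum.distrib)
  qed
  have row_sum: "(\<Sum>l=1..k. ?y i l) = (\<Sum>l=1..k. x i l) + (t - x i j)"
  proof -
    have "(\<Sum>l=1..k. ?y i l) = (\<Sum>l=1..k. x i l + (if l = j then t - x i j else 0))"
      by (rule sum.cong) (auto simp: row)
    then show ?thesis using j by (simp add: sum.distrib)
  qed
  show ?thesis
    using row_affineD[OF H i, of ?y] row_affineD[OF H i, of x]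
    unfolding same_rows vertices row_sum marginal_def by (simp add: algebra_simps)
qed

lemma partial_ij_multilinear_ext:
  assumes "i \<in> {1..n}" and "j \<in> {1..k}"
  shows "partial_ij (multilinear_ext n k f) x i j = marginal (multilinear_ext n k f) i j x"
proof -
  let ?F = "multilinear_ext n k f"
  have "(\<lambda>t. ?F (x(i := (x i)(j := t)))) = (\<lambda>t. ?F x + (t - x i j) * marginal ?F i j x)"
    using row_affine_coordinate[OF row_affine_multilinear_ext assms] by simp
  moreover have "((\<lambda>t. ?F x + (t - x i j) * marginal ?F i j x) has_field_derivative marginal ?F i j x) (at (x i j))"
    by (auto intro!: derivative_eq_intros)
  ultimately show ?thesis unfolding partial_ij_def by (simp add: DERIV_imp_deriv)
qed

subsection \<open>Integral points\<close>

definition integral_point :: "nat \<Rightarrow> nat \<Rightarrow> (nat \<Rightarrow> nat \<Rightarrow> real) \<Rightarrow> bool" where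
  "integral_point n k x = (\<forall>i\<in>{1..n}. x i = zero_row \<or> (\<exists>j\<in>{1..k}. x i = unit_row j))"

definition point_orthant :: "nat \<Rightarrow> nat \<Rightarrow> (nat \<Rightarrow> nat \<Rightarrow> real) \<Rightarrow> (nat \<Rightarrow> nat set)" where
  "point_orthant n k x = (\<lambda>l. if l \<in> {1..k} then {i\<in>{1..n}. x i = unit_row l} else {})"

lemma mem_point_orthant: "i \<in> point_orthant n k x l \<longleftrightarrow> l \<in> {1..k} \<and> i \<in> {1..n} \<and> x i = unit_row l"
  by (auto simp: point_orthant_def)

lemma point_orthant_in_orthants: "point_orthant n k x \<in> orthants n k"
  unfolding orthants_def by (auto simp: point_orthant_def)

lemma integral_point_fun_upd:
  assumes "integral_point n k x"
  shows "j \<in> {1..k} \<Longrightarrow> integral_point n k (x(i := unit_row j))"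
    and "integral_point n k (x(i := zero_row))"
  using assms by (auto simp: integral_point_def)

lemma row_factor_integral_row:
  assumes S: "S \<in> orthants n k" and r: "r = zero_row \<or> (\<exists>j\<in>{1..k}. r = unit_row j)"
  shows "row_factor k S i r = of_bool (\<forall>l\<in>{1..k}. i \<in> S l \<longleftrightarrow> r = unit_row l)"
  using r
proof
  assume r0: "r = zero_row"
  then show ?thesis by (auto simp: row_factor_def zero_row_apply)
next
  assume "\<exists>j\<in>{1..k}. r = unit_row j"
  then obtain j where j: "j \<in> {1..k}" "r = unit_row j" by blast
  have only_j: "i \<in> S l \<longleftrightarrow> l = j" if "l \<in> {1..k}" "i \<in> S j" for l
    using S that j(1) unfolding orthants_def by blast
  show ?thesis
  proof (cases "i \<in> S j")
    case True
    then have "row_factor k S i r = 1"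
      using j orthant_label_unique[OF S j(1) True] by (auto simp: row_factor_def unit_row_def)
    then show ?thesis using j only_j[OF _ True] by auto
  next
    case False
    then have "row_factor k S i r = 0"
      using j orthant_label_mem[of _ k i S] orthant_label_unique[OF S]
      by (auto simp: row_factor_def unit_row_def)
    then show ?thesis using j False by auto
  qed
qed

lemma orthant_eq_point_orthant_iff:
  assumes S: "S \<in> orthants n k"
  shows "S = point_orthant n k x \<longleftrightarrow> (\<forall>i\<in>{1..n}. \<forall>l\<in>{1..k}. i \<in> S l \<longleftrightarrow> x i = unit_row l)"
proof
  assume same: "\<forall>i\<in>{1..n}. \<forall>l\<in>{1..k}. i \<in> S l \<longleftrightarrow> x i = unit_row l"
  show "S = point_orthant n k x"
  proof (intro ext set_eqI)
    fix l i
    show "i \<in> S l \<longleftrightarrow> i \<in> point_orthant n k x l"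
    proof (cases "l \<in> {1..k}")
      case True
      then have "S l \<subseteq> {1..n}" using S by (simp add: orthants_def)
      then show ?thesis using True same by (auto simp: mem_point_orthant)
    next
      case False
      then have "S l = {}" using S by (simp add: orthants_def)
      then show ?thesis using False by (auto simp: mem_point_orthant)
    qed
  qed
qed (auto simp: mem_point_orthant)

lemma multilinear_ext_integral_point:
  assumes x: "integral_point n k x"
  shows "multilinear_ext n k f x = f (point_orthant n k x)"
proof -
  have coefficient: "(\<Prod>i\<in>{1..n}. row_factor k S i (x i)) = of_bool (S = point_orthant n k x)"
    if S: "S \<in> orthants n k" for S
  proof -
    have "(\<Prod>i\<in>{1..n}. row_factor k S i (x i))
        = (\<Prod>i\<in>{1..n}. of_bool (\<forall>l\<in>{1..k}. i \<in> S l \<longleftrightarrow> x i = unit_row l))"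
      using x by (intro prod.cong refl row_factor_integral_row[OF S]) (auto simp: integral_point_def)
    also have "\<dots> = of_bool (\<forall>i\<in>{1..n}. \<forall>l\<in>{1..k}. i \<in> S l \<longleftrightarrow> x i = unit_row l)"
      by (auto intro: prod_zero)
    finally show ?thesis unfolding orthant_eq_point_orthant_iff[OF S] .
  qed
  have "multilinear_ext n k f x = (\<Sum>S\<in>orthants n k. f S * of_bool (S = point_orthant n k x))"
    unfolding multilinear_ext_eq_sum_prod_row_factor by (intro sum.cong refl) (subst coefficient, auto)
  also have "\<dots> = f (point_orthant n k x)"
    using point_orthant_in_orthants[of n k x] finite_orthants by (simp add: Int_absorb1)
  finally show ?thesis .
qed

lemma polytopeP_fun_upd:
  assumes x: "x \<in> polytopeP n k"
  shows "j \<in> {1..k} \<Longrightarrow> x(i := unit_row j) \<in> polytopeP n k" and "x(i := zero_row) \<in> polytopeP n k"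
  using x by (auto simp: polytopeP_def unit_row_def zero_row_apply sum.delta')

lemma integral_point_in_polytopeP:
  assumes "integral_point n k x"
  shows "x \<in> polytopeP n k"
  unfolding polytopeP_def
proof (intro CollectI conjI ballI)
  fix i assume "i \<in> {1..n}"
  then have row: "x i = zero_row \<or> (\<exists>j\<in>{1..k}. x i = unit_row j)"
    using assms by (auto simp: integral_point_def)
  then show "(\<Sum>j=1..k. x i j) \<le> 1" using sum_unit_row[of _ k] by (auto simp: zero_row_apply)
  fix j
  show "0 \<le> x i j" "x i j \<le> 1" using row by (auto simp: zero_row_apply unit_row_def)
qed

text \<open>Expanding the rows one at a time writes \<open>H x\<close>, for \<open>x \<in> polytopeP n k\<close>, as a convex
  combination of values of \<open>H\<close> at integral points.\<close>
lemma row_affine_nonneg: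
  assumes H: "row_affine n k H"
    and integral: "\<And>y. y \<in> polytopeP n k \<Longrightarrow> integral_point n k y \<Longrightarrow> 0 \<le> H y"
    and x: "x \<in> polytopeP n k"
  shows "0 \<le> H x"
proof -
  have "\<forall>x\<in>polytopeP n k. (\<forall>i\<in>{1..n}. m < i \<longrightarrow> x i = zero_row \<or> (\<exists>j\<in>{1..k}. x i = unit_row j))
          \<longrightarrow> 0 \<le> H x" for m
  proof (induction m)
    case 0
    then show ?case using integral by (auto simp: integral_point_def)
  next
    case (Suc m)
    show ?case
    proof (intro ballI impI)
      fix x assume xP: "x \<in> polytopeP n k"
        and tail: "\<forall>i\<in>{1..n}. Suc m < i \<longrightarrow> x i = zero_row \<or> (\<exists>j\<in>{1..k}. x i = unit_row j)"
      show "0 \<le> H x"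
      proof (cases "Suc m \<le> n")
        case False
        then show ?thesis using Suc xP tail by auto
      next
        case True
        let ?i = "Suc m"
        have i: "?i \<in> {1..n}" using True by simp
        have vertex_unit: "0 \<le> H (x(?i := unit_row j))" if j: "j \<in> {1..k}" for j
          using Suc.IH polytopeP_fun_upd(1)[OF xP j] tail j by auto
        have vertex_zero: "0 \<le> H (x(?i := zero_row))"
          using Suc.IH polytopeP_fun_upd(2)[OF xP] tail by auto
        have "0 \<le> x ?i j" if "j \<in> {1..k}" for j using xP i that by (auto simp: polytopeP_def)
        then have "0 \<le> (\<Sum>j=1..k. x ?i j * H (x(?i := unit_row j)))"
          using vertex_unit by (auto intro: sum_nonneg)
        moreover have "0 \<le> (1 - (\<Sum>j=1..k. x ?i j)) * H (x(?i := zero_row))"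
          using xP i vertex_zero by (auto simp: polytopeP_def)
        ultimately show ?thesis using row_affineD[OF H i, of x] by linarith
      qed
    qed
  qed
  from this[of n] x show ?thesis by auto
qed

lemma multilinear_ext_cong:
  assumes "\<forall>i\<in>{1..n}. \<forall>j\<in>{1..k}. x i j = y i j"
  shows "multilinear_ext n k f x = multilinear_ext n k f y"
proof -
  have monomial: "(\<Prod>j\<in>{1..k}. \<Prod>i\<in>S j. x i j) = (\<Prod>j\<in>{1..k}. \<Prod>i\<in>S j. y i j)"
    if S: "S \<in> orthants n k" for S
  proof (intro prod.cong refl)
    fix j i assume j: "j \<in> {1..k}" and i: "i \<in> S j"
    have "S j \<subseteq> {1..n}" using S j unfolding orthants_def by blast
    then show "x i j = y i j" using assms i j by blast
  qed
  have "(\<Sum>j=1..k. x i j) = (\<Sum>j=1..k. y i j)" if "i \<in> {1..n}" for i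
    using assms that by (intro sum.cong) auto
  then have slack: "(\<Prod>i\<in>{1..n} - (\<Union>j\<in>{1..k}. S j). 1 - (\<Sum>j=1..k. x i j))
      = (\<Prod>i\<in>{1..n} - (\<Union>j\<in>{1..k}. S j). 1 - (\<Sum>j=1..k. y i j))" for S
    by (intro prod.cong) auto
  show ?thesis unfolding multilinear_ext_def
    by (intro sum.cong refl) (simp only: monomial slack)
qed

lemma multilinear_ext_le_Max:
  assumes "x \<in> polytopeP n k"
  shows "multilinear_ext n k f x \<le> Max (f ` orthants n k)"
proof -
  have "0 \<le> Max (f ` orthants n k) - multilinear_ext n k f x"
  proof (rule row_affine_nonneg[OF row_affine_diff[OF row_affine_const row_affine_multilinear_ext] _ assms])
    fix y assume "integral_point n k y"
    then show "0 \<le> Max (f ` orthants n k) - multilinear_ext n k f y"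
      by (simp add: multilinear_ext_integral_point point_orthant_in_orthants finite_orthants)
  qed
  then show ?thesis by simp
qed

definition full_point :: "nat \<Rightarrow> nat \<Rightarrow> (nat \<Rightarrow> nat \<Rightarrow> real) \<Rightarrow> bool" where
  "full_point n k E = (\<forall>i\<in>{1..n}. \<exists>j\<in>{1..k}. E i = unit_row j)"

definition orthant_point :: "nat \<Rightarrow> (nat \<Rightarrow> nat set) \<Rightarrow> nat \<Rightarrow> nat \<Rightarrow> real" where
  "orthant_point k S = (\<lambda>i j. if j \<in> {1..k} \<and> i \<in> S j then 1 else 0)"

lemma orthant_point_row:
  assumes S: "S \<in> orthants n k"
  shows "j \<in> {1..k} \<Longrightarrow> i \<in> S j \<Longrightarrow> orthant_point k S i = unit_row j"
    and "\<not> (\<exists>j\<in>{1..k}. i \<in> S j) \<Longrightarrow> orthant_point k S i = zero_row"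
proof -
  assume j: "j \<in> {1..k}" and i: "i \<in> S j"
  have "l \<in> {1..k} \<and> i \<in> S l \<longleftrightarrow> l = j" for l
    using S i j unfolding orthants_def by blast
  then show "orthant_point k S i = unit_row j"
    unfolding orthant_point_def unit_row_def by presburger
next
  assume "\<not> (\<exists>j\<in>{1..k}. i \<in> S j)"
  then show "orthant_point k S i = zero_row"
    unfolding orthant_point_def zero_row_def by auto
qed

lemma integral_point_orthant_point: "S \<in> orthants n k \<Longrightarrow> integral_point n k (orthant_point k S)"
  unfolding integral_point_def by (metis orthant_point_row)

lemma point_orthant_orthant_point:
  assumes S: "S \<in> orthants n k"
  shows "point_orthant n k (orthant_point k S) = S"
proof (intro ext set_eqI)
  fix l i
  show "i \<in> point_orthant n k (orthant_point k S) l \<longleftrightarrow> i \<in> S l"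
  proof (cases "l \<in> {1..k}")
    case True
    have "S l \<subseteq> {1..n}" using S True by (simp add: orthants_def)
    moreover have "orthant_point k S i = unit_row l \<longleftrightarrow> i \<in> S l"
      using orthant_point_row[OF S] True by (metis unit_row_eq_iff unit_row_neq_zero_row(1))
    ultimately show ?thesis using True by (auto simp: mem_point_orthant)
  next
    case False
    then show ?thesis using S by (auto simp: orthants_def mem_point_orthant)
  qed
qed

lemma polytopeP_add_full_point:
  assumes nonneg: "\<forall>i\<in>{1..n}. \<forall>j\<in>{1..k}. 0 \<le> x i j"
    and rows: "\<forall>i\<in>{1..n}. (\<Sum>j=1..k. x i j) + \<alpha> \<le> 1"
    and \<alpha>: "0 \<le> \<alpha>" and E: "full_point n k E"
  shows "(\<lambda>i j. x i j + \<alpha> * E i j) \<in> polytopeP n k"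
proof -
  have E_nonneg: "0 \<le> E i j" and E_rows: "(\<Sum>j=1..k. E i j) = 1" if i: "i \<in> {1..n}" for i j
  proof -
    obtain l where l: "l \<in> {1..k}" "E i = unit_row l" using E i unfolding full_point_def by blast
    show "0 \<le> E i j" by (simp add: l unit_row_def)
    show "(\<Sum>j=1..k. E i j) = 1" by (simp only: l(2) sum_unit_row[OF l(1)])
  qed
  have row_sum: "(\<Sum>j=1..k. x i j + \<alpha> * E i j) \<le> 1" if "i \<in> {1..n}" for i
  proof -
    have "(\<Sum>j=1..k. x i j + \<alpha> * E i j) = (\<Sum>j=1..k. x i j) + \<alpha> * (\<Sum>j=1..k. E i j)"
      by (simp add: sum.distrib sum_distrib_left)
    then show ?thesis using rows that E_rows[OF that] by simp
  qed
  show ?thesis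
    unfolding polytopeP_def
  proof (intro CollectI conjI ballI)
    fix i j assume i: "i \<in> {1..n}" and j: "j \<in> {1..k}"
    show "0 \<le> x i j + \<alpha> * E i j" using nonneg E_nonneg \<alpha> i j by simp
    have "x i j + \<alpha> * E i j \<le> (\<Sum>j=1..k. x i j + \<alpha> * E i j)"
      by (rule member_le_sum) (use i j nonneg E_nonneg \<alpha> in auto)
    then show "x i j + \<alpha> * E i j \<le> 1" using row_sum[OF i] by linarith
  next
    fix i assume "i \<in> {1..n}"
    then show "(\<Sum>j=1..k. x i j + \<alpha> * E i j) \<le> 1" by (rule row_sum)
  qed
qed

subsection \<open>Moving between comparable points one coordinate at a time\<close>

definition patch ::
  "(nat \<times> nat) set \<Rightarrow> (nat \<Rightarrow> nat \<Rightarrow> real) \<Rightarrow> (nat \<Rightarrow> nat \<Rightarrow> real) \<Rightarrow> (nat \<Rightarrow> nat \<Rightarrow> real)" where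
  "patch A p q = (\<lambda>i j. if (i, j) \<in> A then q i j else p i j)"

lemma row_affine_patch_bounds:
  assumes H: "row_affine n k H" and A: "finite A" "A \<subseteq> {1..n} \<times> {1..k}"
    and pq: "\<forall>i\<in>{1..n}. \<forall>j\<in>{1..k}. p i j \<le> q i j"
    and marginal_bounds: "\<And>y i j. i \<in> {1..n} \<Longrightarrow> j \<in> {1..k} \<Longrightarrow>
       \<forall>i\<in>{1..n}. \<forall>j\<in>{1..k}. p i j \<le> y i j \<and> y i j \<le> q i j \<Longrightarrow>
       lo i j \<le> marginal H i j y \<and> marginal H i j y \<le> hi i j"
  shows "(\<Sum>(i,j)\<in>A. (q i j - p i j) * lo i j) \<le> H (patch A p q) - H p
       \<and> H (patch A p q) - H p \<le> (\<Sum>(i,j)\<in>A. (q i j - p i j) * hi i j)"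
  using A
proof (induction A rule: finite_induct)
  case empty
  then show ?case by (simp add: patch_def)
next
  case (insert c A)
  obtain i j where c: "c = (i, j)" by (cases c)
  have i: "i \<in> {1..n}" and j: "j \<in> {1..k}" using insert.prems c by auto
  let ?y = "patch A p q"
  have "patch (insert c A) p q = ?y(i := (?y i)(j := q i j))"
    unfolding patch_def c by (intro ext) auto
  moreover have "?y i j = p i j" using insert.hyps(2) c by (simp add: patch_def)
  ultimately have step: "H (patch (insert c A) p q) = H ?y + (q i j - p i j) * marginal H i j ?y"
    using row_affine_coordinate[OF H i j] by simp
  have "lo i j \<le> marginal H i j ?y" "marginal H i j ?y \<le> hi i j"
    using marginal_bounds[OF i j] pq by (auto simp: patch_def)
  moreover have "0 \<le> q i j - p i j" using pq i j by auto
  ultimately have "(q i j - p i j) * lo i j \<le> (q i j - p i j) * marginal H i j ?y"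
    "(q i j - p i j) * marginal H i j ?y \<le> (q i j - p i j) * hi i j"
    by (simp_all add: mult_left_mono)
  then show ?case using insert step c by (simp add: sum.insert)
qed

lemma patch_grid: "\<forall>i\<in>{1..n}. \<forall>j\<in>{1..k}. patch ({1..n} \<times> {1..k}) p q i j = q i j"
  by (simp add: patch_def)

lemma polytopeP_between:
  assumes p: "p \<in> polytopeP n k" and q: "q \<in> polytopeP n k"
    and y: "\<forall>i\<in>{1..n}. \<forall>j\<in>{1..k}. p i j \<le> y i j \<and> y i j \<le> q i j"
  shows "y \<in> polytopeP n k"
  unfolding polytopeP_def
proof (intro CollectI conjI ballI)
  fix i j assume i: "i \<in> {1..n}" and j: "j \<in> {1..k}"
  have "0 \<le> p i j" "q i j \<le> 1" "p i j \<le> y i j" "y i j \<le> q i j"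
    using p q y i j unfolding polytopeP_def by blast+
  then show "0 \<le> y i j" "y i j \<le> 1" by linarith+
next
  fix i assume i: "i \<in> {1..n}"
  have "(\<Sum>j=1..k. y i j) \<le> (\<Sum>j=1..k. q i j)" using y i by (intro sum_mono) auto
  also have "\<dots> \<le> 1" using q i unfolding polytopeP_def by blast
  finally show "(\<Sum>j=1..k. y i j) \<le> 1" .
qed

subsection \<open>Marginals of the multilinear extension of a \<open>k\<close>-submodular function\<close>

lemma kmeet_kjoin_same_row:
  assumes "j \<in> {1..k}" "j' \<in> {1..k}" "j \<noteq> j'"
  shows "kmeet (point_orthant n k (y(i := unit_row j))) (point_orthant n k (y(i := unit_row j')))
           = point_orthant n k (y(i := zero_row))"
    and "kjoin k (point_orthant n k (y(i := unit_row j))) (point_orthant n k (y(i := unit_row j')))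
           = point_orthant n k (y(i := zero_row))"
  using assms by (intro ext set_eqI; auto simp: kmeet_def kjoin_def point_orthant_def)+

lemma kmeet_kjoin_distinct_rows:
  assumes "i \<noteq> i'" "j \<in> {1..k}" "j' \<in> {1..k}"
  shows "kmeet (point_orthant n k (y(i' := zero_row, i := unit_row j))) (point_orthant n k (y(i' := unit_row j', i := zero_row)))
           = point_orthant n k (y(i' := zero_row, i := zero_row))"
    and "kjoin k (point_orthant n k (y(i' := zero_row, i := unit_row j))) (point_orthant n k (y(i' := unit_row j', i := zero_row)))
           = point_orthant n k (y(i' := unit_row j', i := unit_row j))"
  using assms by (intro ext set_eqI; auto simp: kmeet_def kjoin_def point_orthant_def)+

locale nonneg_k_submodular =
  fixes n k :: nat and f :: "(nat \<Rightarrow> nat set) \<Rightarrow> real"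
  assumes nonneg: "\<forall>S\<in>orthants n k. 0 \<le> f S"
    and submodular: "k_submodular n k f"
begin

abbreviation F :: "(nat \<Rightarrow> nat \<Rightarrow> real) \<Rightarrow> real" where
  "F \<equiv> multilinear_ext n k f"

abbreviation OPT :: real where
  "OPT \<equiv> Max (f ` orthants n k)"

lemma multilinear_ext_nonneg: "x \<in> polytopeP n k \<Longrightarrow> 0 \<le> F x"
  by (rule row_affine_nonneg[OF row_affine_multilinear_ext])
    (auto simp: multilinear_ext_integral_point point_orthant_in_orthants nonneg)

lemma marginal_abs_le:
  assumes x: "x \<in> polytopeP n k" and j: "j \<in> {1..k}"
  shows "\<bar>marginal F i j x\<bar> \<le> OPT"
proof -
  have "x(i := unit_row j) \<in> polytopeP n k" "x(i := zero_row) \<in> polytopeP n k"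
    using polytopeP_fun_upd[OF x] j by blast+
  then have "0 \<le> F (x(i := unit_row j))" "F (x(i := unit_row j)) \<le> OPT"
    "0 \<le> F (x(i := zero_row))" "F (x(i := zero_row)) \<le> OPT"
    using multilinear_ext_nonneg multilinear_ext_le_Max by blast+
  then show ?thesis unfolding marginal_def by linarith
qed

lemma marginal_marginal_abs_le:
  assumes x: "x \<in> polytopeP n k" and j: "j \<in> {1..k}" "j' \<in> {1..k}"
  shows "\<bar>marginal (marginal F i j) i' j' x\<bar> \<le> 2 * OPT"
proof -
  have "x(i' := unit_row j') \<in> polytopeP n k" "x(i' := zero_row) \<in> polytopeP n k"
    using polytopeP_fun_upd[OF x] j by blast+
  then have "\<bar>marginal F i j (x(i' := unit_row j'))\<bar> \<le> OPT" "\<bar>marginal F i j (x(i' := zero_row))\<bar> \<le> OPT"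
    using marginal_abs_le j by blast+
  then show ?thesis unfolding marginal_def[of "marginal F i j"] by linarith
qed

text \<open>The continuous form of pairwise monotonicity.\<close>
lemma marginal_pair_nonneg:
  assumes x: "x \<in> polytopeP n k" and j: "j \<in> {1..k}" "j' \<in> {1..k}" "j \<noteq> j'"
  shows "0 \<le> marginal F i j x + marginal F i j' x"
proof (rule row_affine_nonneg[OF row_affine_add[OF row_affine_marginal row_affine_marginal, OF row_affine_multilinear_ext row_affine_multilinear_ext] _ x])
  fix y assume y: "integral_point n k y"
  have "f (kmeet (point_orthant n k (y(i := unit_row j))) (point_orthant n k (y(i := unit_row j'))))
      + f (kjoin k (point_orthant n k (y(i := unit_row j))) (point_orthant n k (y(i := unit_row j'))))
     \<le> f (point_orthant n k (y(i := unit_row j))) + f (point_orthant n k (y(i := unit_row j')))"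
    using submodular point_orthant_in_orthants unfolding k_submodular_def by blast
  then show "0 \<le> marginal F i j y + marginal F i j' y"
    unfolding kmeet_kjoin_same_row[OF j] marginal_def
    using y j by (simp add: multilinear_ext_integral_point integral_point_fun_upd)
qed

text \<open>The continuous form of orthant submodularity: each marginal is antitone in every other row.\<close>
lemma marginal_marginal_nonpos:
  assumes x: "x \<in> polytopeP n k" and j: "j \<in> {1..k}" "j' \<in> {1..k}"
  shows "marginal (marginal F i j) i' j' x \<le> 0"
proof (cases "i = i'")
  case True
  then show ?thesis by (simp add: marginal_def)
next
  case False
  have "0 \<le> (-1) * marginal (marginal F i j) i' j' x"
  proof (rule row_affine_nonneg[OF row_affine_scale[OF row_affine_marginal[OF row_affine_marginal[OF row_affine_multilinear_ext]]] _ x])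
    fix y assume y: "integral_point n k y"
    have "f (kmeet (point_orthant n k (y(i' := zero_row, i := unit_row j))) (point_orthant n k (y(i' := unit_row j', i := zero_row))))
        + f (kjoin k (point_orthant n k (y(i' := zero_row, i := unit_row j))) (point_orthant n k (y(i' := unit_row j', i := zero_row))))
     \<le> f (point_orthant n k (y(i' := zero_row, i := unit_row j))) + f (point_orthant n k (y(i' := unit_row j', i := zero_row)))"
      using submodular point_orthant_in_orthants unfolding k_submodular_def by blast
    moreover have "integral_point n k (y(i' := zero_row, i := unit_row j))" "integral_point n k (y(i' := unit_row j', i := zero_row))"
        "integral_point n k (y(i' := zero_row, i := zero_row))" "integral_point n k (y(i' := unit_row j', i := unit_row j))"
      using y j by (auto intro!: integral_point_fun_upd)
    ultimately show "0 \<le> (-1) * marginal (marginal F i j) i' j' y"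
      unfolding kmeet_kjoin_distinct_rows[OF False j] marginal_def by (simp add: multilinear_ext_integral_point)
  qed
  then show ?thesis by simp
qed

lemma marginal_antitone:
  assumes p: "p \<in> polytopeP n k" and q: "q \<in> polytopeP n k"
    and pq: "\<forall>i\<in>{1..n}. \<forall>j\<in>{1..k}. p i j \<le> q i j"
    and i: "i \<in> {1..n}" and j: "j \<in> {1..k}"
  shows "- 2 * OPT * (\<Sum>i'=1..n. \<Sum>j'=1..k. q i' j' - p i' j') \<le> marginal F i j q - marginal F i j p"
    and "marginal F i j q \<le> marginal F i j p"
proof -
  let ?C = "{1..n} \<times> {1..k}"
  have bounds: "(\<Sum>(i',j')\<in>?C. (q i' j' - p i' j') * (- 2 * OPT))
        \<le> marginal F i j (patch ?C p q) - marginal F i j p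
      \<and> marginal F i j (patch ?C p q) - marginal F i j p \<le> (\<Sum>(i',j')\<in>?C. (q i' j' - p i' j') * 0)"
  proof (rule row_affine_patch_bounds[OF row_affine_marginal[OF row_affine_multilinear_ext] _ _ pq])
    fix y i' j' assume "i' \<in> {1..n}" "j' \<in> {1..k}"
      and "\<forall>i\<in>{1..n}. \<forall>j\<in>{1..k}. p i j \<le> y i j \<and> y i j \<le> q i j"
    moreover from this(3) have "y \<in> polytopeP n k" by (rule polytopeP_between[OF p q])
    ultimately show "- 2 * OPT \<le> marginal (marginal F i j) i' j' y \<and> marginal (marginal F i j) i' j' y \<le> 0"
      using marginal_marginal_nonpos[OF _ j] marginal_marginal_abs_le[OF _ j, of y j' i i']
      by (simp add: abs_le_iff)
  qed auto
  have "marginal F i j (patch ?C p q) = marginal F i j q"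
    unfolding marginal_def using patch_grid[of n k p q]
    by (intro arg_cong2[where f = "(-)"] multilinear_ext_cong) auto
  moreover have "(\<Sum>(i',j')\<in>?C. (q i' j' - p i' j') * (- 2 * OPT))
      = - 2 * OPT * (\<Sum>i'=1..n. \<Sum>j'=1..k. q i' j' - p i' j')"
    by (simp add: sum.cartesian_product[symmetric] sum_distrib_left mult.commute)
  ultimately show "- 2 * OPT * (\<Sum>i'=1..n. \<Sum>j'=1..k. q i' j' - p i' j') \<le> marginal F i j q - marginal F i j p"
    and "marginal F i j q \<le> marginal F i j p"
    using bounds by simp_all
qed

lemma multilinear_ext_increment_bounds:
  assumes p: "p \<in> polytopeP n k" and q: "q \<in> polytopeP n k"
    and pq: "\<forall>i\<in>{1..n}. \<forall>j\<in>{1..k}. p i j \<le> q i j"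
  shows "(\<Sum>i=1..n. \<Sum>j=1..k. (q i j - p i j) * marginal F i j q) \<le> F q - F p"
    and "F q - F p \<le> (\<Sum>i=1..n. \<Sum>j=1..k. (q i j - p i j) * marginal F i j p)"
proof -
  let ?C = "{1..n} \<times> {1..k}"
  have "(\<Sum>(i,j)\<in>?C. (q i j - p i j) * marginal F i j q) \<le> F (patch ?C p q) - F p
       \<and> F (patch ?C p q) - F p \<le> (\<Sum>(i,j)\<in>?C. (q i j - p i j) * marginal F i j p)"
  proof (rule row_affine_patch_bounds[OF row_affine_multilinear_ext _ _ pq])
    fix y i j assume i: "i \<in> {1..n}" and j: "j \<in> {1..k}"
      and y: "\<forall>i\<in>{1..n}. \<forall>j\<in>{1..k}. p i j \<le> y i j \<and> y i j \<le> q i j"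
    have "y \<in> polytopeP n k" by (rule polytopeP_between[OF p q y])
    then show "marginal F i j q \<le> marginal F i j y \<and> marginal F i j y \<le> marginal F i j p"
      using marginal_antitone(2)[OF _ q _ i j, of y] marginal_antitone(2)[OF p _ _ i j, of y] y by blast
  qed auto
  moreover have "F (patch ?C p q) = F q"
    using patch_grid[of n k p q] by (intro multilinear_ext_cong) auto
  ultimately show "(\<Sum>i=1..n. \<Sum>j=1..k. (q i j - p i j) * marginal F i j q) \<le> F q - F p"
    and "F q - F p \<le> (\<Sum>i=1..n. \<Sum>j=1..k. (q i j - p i j) * marginal F i j p)"
    by (simp_all add: sum.cartesian_product[symmetric])
qed

lemma multilinear_ext_increment_lower:
  assumes p: "p \<in> polytopeP n k" and q: "q \<in> polytopeP n k"
    and pq: "\<forall>i\<in>{1..n}. \<forall>j\<in>{1..k}. p i j \<le> q i j"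
  defines "d \<equiv> (\<Sum>i=1..n. \<Sum>j=1..k. q i j - p i j)"
  shows "(\<Sum>i=1..n. \<Sum>j=1..k. (q i j - p i j) * marginal F i j p) - 2 * OPT * d\<^sup>2 \<le> F q - F p"
proof -
  have "(\<Sum>i=1..n. \<Sum>j=1..k. (q i j - p i j) * marginal F i j p) - 2 * OPT * d\<^sup>2
      = (\<Sum>i=1..n. \<Sum>j=1..k. (q i j - p i j) * (marginal F i j p - 2 * OPT * d))"
  proof -
    have "(\<Sum>i=1..n. \<Sum>j=1..k. (q i j - p i j) * (marginal F i j p - 2 * OPT * d))
        = (\<Sum>i=1..n. \<Sum>j=1..k. (q i j - p i j) * marginal F i j p - (2 * OPT * d) * (q i j - p i j))"
      by (simp add: right_diff_distrib mult.commute)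
    also have "\<dots> = (\<Sum>i=1..n. \<Sum>j=1..k. (q i j - p i j) * marginal F i j p)
        - (\<Sum>i=1..n. \<Sum>j=1..k. (2 * OPT * d) * (q i j - p i j))"
      by (simp only: sum_subtractf)
    also have "(\<Sum>i=1..n. \<Sum>j=1..k. (2 * OPT * d) * (q i j - p i j)) = 2 * OPT * d\<^sup>2"
      by (simp only: d_def sum_distrib_left[symmetric] power2_eq_square mult.assoc)
    finally show ?thesis by (rule sym)
  qed
  also have "\<dots> \<le> (\<Sum>i=1..n. \<Sum>j=1..k. (q i j - p i j) * marginal F i j q)"
    using pq marginal_antitone(1)[OF p q pq] unfolding d_def
    by (intro sum_mono mult_left_mono) (auto simp: algebra_simps)
  also have "\<dots> \<le> F q - F p" by (rule multilinear_ext_increment_bounds(1)[OF p q pq])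
  finally show ?thesis .
qed

lemma exists_label_not_decreasing:
  assumes k: "2 \<le> k" and y: "y \<in> polytopeP n k"
  shows "\<exists>j\<in>{1..k}. F (y(i := zero_row)) \<le> F (y(i := unit_row j))"
proof -
  have labels: "1 \<in> {1..k}" "2 \<in> {1..k}" "(1::nat) \<noteq> 2" using k by auto
  then have "0 \<le> marginal F i 1 y \<or> 0 \<le> marginal F i 2 y"
    using marginal_pair_nonneg[OF y labels, of i] by linarith
  then show ?thesis using labels unfolding marginal_def by auto
qed

lemma exists_full_point_ge:
  assumes k: "2 \<le> k" and y: "integral_point n k y"
  shows "\<exists>E. full_point n k E \<and> F y \<le> F E"
  using y
proof (induction "card {i\<in>{1..n}. y i = zero_row}" arbitrary: y rule: less_induct)
  case less
  show ?case
  proof (cases "\<exists>i\<in>{1..n}. y i = zero_row")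
    case False
    then have "full_point n k y" using less.prems by (auto simp: full_point_def integral_point_def)
    then show ?thesis by blast
  next
    case True
    then obtain i where i: "i \<in> {1..n}" "y i = zero_row" by blast
    then have "y(i := zero_row) = y" by auto
    then obtain j where j: "j \<in> {1..k}" and le: "F y \<le> F (y(i := unit_row j))"
      using exists_label_not_decreasing[OF k integral_point_in_polytopeP[OF less.prems], of i] by auto
    have "{i'\<in>{1..n}. (y(i := unit_row j)) i' = zero_row} \<subset> {i'\<in>{1..n}. y i' = zero_row}"
      using i by auto
    then have "card {i'\<in>{1..n}. (y(i := unit_row j)) i' = zero_row} < card {i'\<in>{1..n}. y i' = zero_row}"
      by (simp add: psubset_card_mono)
    then obtain E where "full_point n k E" "F (y(i := unit_row j)) \<le> F E"
      using less.hyps integral_point_fun_upd(1)[OF less.prems j] by blast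
    then show ?thesis using le by auto
  qed
qed

lemma exists_full_point_ge_OPT:
  assumes "2 \<le> k"
  shows "\<exists>E. full_point n k E \<and> OPT \<le> F E"
proof -
  have "(\<lambda>j. {}) \<in> orthants n k" by (simp add: orthants_def)
  then have "OPT \<in> f ` orthants n k" using finite_orthants by (intro Max_in) auto
  then obtain S where S: "S \<in> orthants n k" "f S = OPT" by auto
  then have "F (orthant_point k S) = OPT"
    by (simp add: multilinear_ext_integral_point integral_point_orthant_point point_orthant_orthant_point)
  then show ?thesis using exists_full_point_ge[OF assms integral_point_orthant_point[OF S(1)]] by auto
qed

end

subsection \<open>The meta-framework\<close>

lemma valid_directionD:
  assumes "valid_direction n k v" "i \<in> {1..n}"
  shows "j \<in> {1..k} \<Longrightarrow> 0 \<le> v i j" and "(\<Sum>j=1..k. v i j) = 1"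
  using assms unfolding valid_direction_def by blast+

lemma sum_full_point_minus_sum_direction:
  assumes v: "valid_direction n k v"
    and E: "\<forall>i\<in>{1..n}. label i \<in> {1..k} \<and> E i = unit_row (label i)"
  shows "(\<Sum>i=1..n. \<Sum>j=1..k. E i j * a i j) - (\<Sum>i=1..n. \<Sum>j=1..k. v i j * a i j)
       = (\<Sum>i=1..n. \<Sum>j=1..k. v i j * (a i (label i) - a i j))"
proof -
  have "(\<Sum>j=1..k. v i j * (a i (label i) - a i j))
      = (\<Sum>j=1..k. E i j * a i j) - (\<Sum>j=1..k. v i j * a i j)" if i: "i \<in> {1..n}" for i
  proof -
    have "(\<Sum>j=1..k. E i j * a i j) = (\<Sum>j=1..k. if j = label i then a i j else 0)"
      using E i by (intro sum.cong) (auto simp: unit_row_def)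
    then have "(\<Sum>j=1..k. E i j * a i j) = a i (label i)"
      using E i by (simp add: sum.delta')
    moreover have "(\<Sum>j=1..k. v i j * (a i (label i) - a i j))
        = (\<Sum>j=1..k. v i j) * a i (label i) - (\<Sum>j=1..k. v i j * a i j)"
      by (simp add: right_diff_distrib sum_subtractf sum_distrib_right)
    ultimately show ?thesis using valid_directionD(2)[OF v i] by simp
  qed
  then show ?thesis by (simp add: sum_subtractf)
qed

lemma traj_eq_sum: "traj \<delta> v t i j = \<delta> * (\<Sum>\<tau><t. v \<tau> i j)"
  by (induction t) (simp_all add: algebra_simps)

lemma traj_nonneg:
  assumes "0 \<le> \<delta>" "\<forall>\<tau><t. valid_direction n k (v \<tau>)" "i \<in> {1..n}" "j \<in> {1..k}"
  shows "0 \<le> traj \<delta> v t i j"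
proof -
  have "0 \<le> v \<tau> i j" if "\<tau> < t" for \<tau>
    using assms that valid_directionD(1) by blast
  then show ?thesis unfolding traj_eq_sum using assms(1) by (intro mult_nonneg_nonneg sum_nonneg) auto
qed

lemma traj_row_sum:
  assumes "\<forall>\<tau><t. valid_direction n k (v \<tau>)" "i \<in> {1..n}"
  shows "(\<Sum>j=1..k. traj \<delta> v t i j) = \<delta> * real t"
proof -
  have "(\<Sum>j=1..k. traj \<delta> v t i j) = \<delta> * (\<Sum>\<tau><t. \<Sum>j=1..k. v \<tau> i j)"
    unfolding traj_eq_sum sum_distrib_left[symmetric] by (subst sum.swap) simp
  also have "(\<Sum>\<tau><t. \<Sum>j=1..k. v \<tau> i j) = (\<Sum>\<tau><t. 1)"
    using assms valid_directionD(2) by (intro sum.cong) auto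
  finally show ?thesis by simp
qed

lemma traj_plus_full_point_in_polytopeP:
  assumes \<delta>: "0 \<le> \<delta>" and valid: "\<forall>\<tau><t. valid_direction n k (v \<tau>)" and E: "full_point n k E"
    and \<alpha>: "0 \<le> \<alpha>" "real t * \<delta> + \<alpha> \<le> 1"
  shows "(\<lambda>i j. traj \<delta> v t i j + \<alpha> * E i j) \<in> polytopeP n k"
proof (rule polytopeP_add_full_point[OF _ _ \<alpha>(1) E])
  show "\<forall>i\<in>{1..n}. \<forall>j\<in>{1..k}. 0 \<le> traj \<delta> v t i j"
    using traj_nonneg[OF \<delta> valid] by blast
  show "\<forall>i\<in>{1..n}. (\<Sum>j=1..k. traj \<delta> v t i j) + \<alpha> \<le> 1"
    using traj_row_sum[OF valid] \<alpha>(2) by (simp add: mult.commute)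
qed

context nonneg_k_submodular
begin

lemma good_direction_at_upper_point:
  assumes x: "x \<in> polytopeP n k" and w: "w \<in> polytopeP n k"
    and xw: "\<forall>i\<in>{1..n}. \<forall>j\<in>{1..k}. x i j \<le> w i j"
    and good: "good_direction n k c (\<lambda>i j. partial_ij F x i j) v"
    and label: "\<forall>i\<in>{1..n}. label i \<in> {1..k}"
  shows "(\<Sum>i=1..n. \<Sum>j=1..k. v i j * (marginal F i (label i) w - marginal F i j w))
       \<le> c * (\<Sum>i=1..n. \<Sum>j=1..k. v i j * marginal F i j x)"
proof -
  have "(\<Sum>i=1..n. \<Sum>j=1..k. v i j * partial_ij F x i j) = (\<Sum>i=1..n. \<Sum>j=1..k. v i j * marginal F i j x)"
    by (intro sum.cong refl) (simp add: partial_ij_multilinear_ext)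
  moreover have "(\<Sum>i=1..n. \<Sum>j=1..k. v i j * (marginal F i (label i) w - marginal F i j w))
      \<le> c * (\<Sum>i=1..n. \<Sum>j=1..k. v i j * partial_ij F x i j)"
  proof (rule good[unfolded good_direction_def, rule_format])
    show "0 \<le> marginal F i j w + marginal F i j' w"
      if "i \<in> {1..n}" "j \<in> {1..k}" "j' \<in> {1..k}" "j \<noteq> j'" for i j j'
      using marginal_pair_nonneg[OF w] that by blast
    show "marginal F i j w \<le> partial_ij F x i j" if "i \<in> {1..n}" "j \<in> {1..k}" for i j
      using marginal_antitone(2)[OF x w xw that] that by (simp add: partial_ij_multilinear_ext)
    show "label i \<in> {1..k}" if "i \<in> {1..n}" for i
      using label that by blast
  qed
  ultimately show ?thesis by simp
qed

lemma framework_step: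
  assumes x: "x \<in> polytopeP n k" and w: "w \<in> polytopeP n k"
    and xw: "\<forall>i\<in>{1..n}. \<forall>j\<in>{1..k}. x i j \<le> w i j"
    and xv: "(\<lambda>i j. x i j + \<delta> * v i j) \<in> polytopeP n k"
    and wv: "(\<lambda>i j. w i j + \<delta> * v i j) \<in> polytopeP n k"
    and wE: "(\<lambda>i j. w i j + \<delta> * E i j) \<in> polytopeP n k"
    and \<delta>: "0 \<le> \<delta>" and c: "0 \<le> c"
    and v: "valid_direction n k v" and E: "full_point n k E"
    and good: "good_direction n k c (\<lambda>i j. partial_ij F x i j) v"
  shows "F (\<lambda>i j. w i j + \<delta> * E i j) - F (\<lambda>i j. w i j + \<delta> * v i j)
       \<le> c * (F (\<lambda>i j. x i j + \<delta> * v i j) - F x) + 2 * (c + 1) * OPT * (real n * \<delta>)\<^sup>2"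
proof -
  let ?pair = "\<lambda>u p. \<Sum>i=1..n. \<Sum>j=1..k. u i j * marginal F i j p"
  obtain label where label: "\<forall>i\<in>{1..n}. label i \<in> {1..k} \<and> E i = unit_row (label i)"
    using E unfolding full_point_def by metis
  have v_nonneg: "\<forall>i\<in>{1..n}. \<forall>j\<in>{1..k}. 0 \<le> v i j" using valid_directionD(1)[OF v] by blast
  have E_nonneg: "\<forall>i\<in>{1..n}. \<forall>j\<in>{1..k}. 0 \<le> E i j" using label by (auto simp: unit_row_def)
  have scaled: "(\<Sum>i=1..n. \<Sum>j=1..k. (p i j + \<delta> * u i j - p i j) * g i j)
      = \<delta> * (\<Sum>i=1..n. \<Sum>j=1..k. u i j * g i j)" for p u g :: "nat \<Rightarrow> nat \<Rightarrow> real"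
    by (simp add: sum_distrib_left mult.assoc)
  have step_size: "(\<Sum>i=1..n. \<Sum>j=1..k. p i j + \<delta> * v i j - p i j) = real n * \<delta>" for p
    using valid_directionD(2)[OF v] by (simp add: sum_distrib_left[symmetric] mult.commute)
  have gain_x: "\<delta> * ?pair v x - 2 * OPT * (real n * \<delta>)\<^sup>2 \<le> F (\<lambda>i j. x i j + \<delta> * v i j) - F x"
    using multilinear_ext_increment_lower[OF x xv] v_nonneg \<delta>
    unfolding scaled step_size by simp
  have gain_wv: "\<delta> * ?pair v w - 2 * OPT * (real n * \<delta>)\<^sup>2 \<le> F (\<lambda>i j. w i j + \<delta> * v i j) - F w"
    using multilinear_ext_increment_lower[OF w wv] v_nonneg \<delta>
    unfolding scaled step_size by simp
  have gain_wE: "F (\<lambda>i j. w i j + \<delta> * E i j) - F w \<le> \<delta> * ?pair E w"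
    using multilinear_ext_increment_bounds(2)[OF w wE] E_nonneg \<delta>
    unfolding scaled by simp
  have "(\<Sum>i=1..n. \<Sum>j=1..k. v i j * (marginal F i (label i) w - marginal F i j w)) \<le> c * ?pair v x"
    using good_direction_at_upper_point[OF x w xw good] label by blast
  then have "?pair E w - ?pair v w \<le> c * ?pair v x"
    using sum_full_point_minus_sum_direction[OF v label] by simp
  then have "\<delta> * (?pair E w - ?pair v w) \<le> \<delta> * (c * ?pair v x)"
    by (rule mult_left_mono[OF _ \<delta>])
  moreover have "c * (\<delta> * ?pair v x) \<le> c * (F (\<lambda>i j. x i j + \<delta> * v i j) - F x + 2 * OPT * (real n * \<delta>)\<^sup>2)"
    using gain_x c by (intro mult_left_mono) simp_all
  moreover have "c * (F (\<lambda>i j. x i j + \<delta> * v i j) - F x + 2 * OPT * (real n * \<delta>)\<^sup>2) + 2 * OPT * (real n * \<delta>)\<^sup>2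
      = c * (F (\<lambda>i j. x i j + \<delta> * v i j) - F x) + 2 * (c + 1) * OPT * (real n * \<delta>)\<^sup>2"
    by (simp add: algebra_simps)
  ultimately show ?thesis
    using gain_wv gain_wE by (simp only: right_diff_distrib mult.left_commute[of \<delta> c])
qed

lemma traj_interpolation_step:
  assumes c: "0 \<le> c" and \<delta>: "0 < \<delta>" "real (Suc t) * \<delta> \<le> 1" and E: "full_point n k E"
    and valid: "\<forall>\<tau>\<le>t. valid_direction n k (v \<tau>)"
    and good: "good_direction n k c (\<lambda>i j. partial_ij F (traj \<delta> v t) i j) (v t)"
  defines "z \<equiv> \<lambda>t i j. traj \<delta> v t i j + (1 - real t * \<delta>) * E i j"
  shows "F (z t) - F (z (Suc t))
       \<le> c * (F (traj \<delta> v (Suc t)) - F (traj \<delta> v t)) + 2 * (c + 1) * OPT * (real n * \<delta>)\<^sup>2"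
proof -
  let ?s = "traj \<delta> v"
  define w where "w = (\<lambda>i j. ?s t i j + (1 - real (Suc t) * \<delta>) * E i j)"
  have \<beta>: "0 \<le> 1 - real (Suc t) * \<delta>" using \<delta>(2) by simp
  have time_t: "real t * \<delta> \<le> 1" using \<delta> by (simp add: algebra_simps)
  have z_t: "z t = (\<lambda>i j. w i j + \<delta> * E i j)"
    and z_Suc: "z (Suc t) = (\<lambda>i j. w i j + \<delta> * v t i j)"
    and s_Suc: "?s (Suc t) = (\<lambda>i j. ?s t i j + \<delta> * v t i j)"
    by (simp_all add: z_def w_def algebra_simps)
  have valid_t: "\<forall>\<tau><t. valid_direction n k (v \<tau>)" and valid_Suc: "\<forall>\<tau><Suc t. valid_direction n k (v \<tau>)"
    using valid by auto
  have "z t \<in> polytopeP n k" "z (Suc t) \<in> polytopeP n k"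
    using traj_plus_full_point_in_polytopeP[OF less_imp_le[OF \<delta>(1)] valid_t E, of "1 - real t * \<delta>"]
      traj_plus_full_point_in_polytopeP[OF less_imp_le[OF \<delta>(1)] valid_Suc E, of "1 - real (Suc t) * \<delta>"]
      \<beta> time_t unfolding z_def by simp_all
  moreover have "?s t \<in> polytopeP n k" "?s (Suc t) \<in> polytopeP n k"
    using traj_plus_full_point_in_polytopeP[OF less_imp_le[OF \<delta>(1)] valid_t E, of 0]
      traj_plus_full_point_in_polytopeP[OF less_imp_le[OF \<delta>(1)] valid_Suc E, of 0] \<delta>(2) time_t by simp_all
  moreover have "w \<in> polytopeP n k"
    using traj_plus_full_point_in_polytopeP[OF less_imp_le[OF \<delta>(1)] valid_t E, of "1 - real (Suc t) * \<delta>"]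
      \<beta> \<delta>(1) unfolding w_def by (simp add: algebra_simps)
  moreover have "\<forall>i\<in>{1..n}. \<forall>j\<in>{1..k}. ?s t i j \<le> w i j"
    using \<beta> E by (auto simp: w_def full_point_def unit_row_def)
  ultimately show ?thesis
    using framework_step[of "?s t" w \<delta> "v t" E c] valid good c \<delta>(1) E unfolding z_t z_Suc s_Suc by simp
qed

text \<open>Telescoping \<open>traj_interpolation_step\<close>: the interpolating points run from \<open>E\<close> to the
  output.\<close>
lemma traj_guarantee:
  assumes c: "0 \<le> c" and N: "0 < N" and E: "full_point n k E"
    and dirs: "\<forall>t<N. valid_direction n k (v t)
       \<and> good_direction n k c (\<lambda>i j. partial_ij F (traj (1 / real N) v t) i j) (v t)"
  shows "traj (1 / real N) v N \<in> polytopeP n k"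
    and "F E / (c + 1) - 2 * OPT * (real n)\<^sup>2 / real N \<le> F (traj (1 / real N) v N)"
proof -
  define \<delta> where "\<delta> = 1 / real N"
  define s where "s = traj \<delta> v"
  define z where "z t = (\<lambda>i j. s t i j + (1 - real t * \<delta>) * E i j)" for t
  define K where "K = 2 * (c + 1) * OPT * (real n * \<delta>)\<^sup>2"
  have \<delta>: "0 < \<delta>" "real N * \<delta> = 1" using N by (simp_all add: \<delta>_def)
  have valid: "\<forall>\<tau><N. valid_direction n k (v \<tau>)" using dirs by blast
  have step: "F (z t) - F (z (Suc t)) \<le> c * (F (s (Suc t)) - F (s t)) + K" if t: "t < N" for t
  proof (unfold z_def s_def K_def, rule traj_interpolation_step[OF c \<delta>(1) _ E])
    show "real (Suc t) * \<delta> \<le> 1"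
      using t \<delta> mult_right_mono[of "real (Suc t)" "real N" \<delta>] by simp
  qed (use dirs t in \<open>auto simp: \<delta>_def\<close>)
  have "F (z 0) - F (z N) = (\<Sum>t<N. F (z t) - F (z (Suc t)))"
    by (rule sum_lessThan_telescope'[symmetric])
  also have "\<dots> \<le> (\<Sum>t<N. c * (F (s (Suc t)) - F (s t)) + K)"
    using step by (intro sum_mono) auto
  also have "\<dots> = c * (F (s N) - F (s 0)) + real N * K"
    using sum_lessThan_telescope[of "\<lambda>t. F (s t)" N] by (simp add: sum.distrib flip: sum_distrib_left)
  finally have telescoped: "F E - F (s N) \<le> c * (F (s N) - F (s 0)) + real N * K"
    using \<delta>(2) by (simp add: z_def s_def)
  show "traj (1 / real N) v N \<in> polytopeP n k"
    using traj_plus_full_point_in_polytopeP[OF less_imp_le[OF \<delta>(1)] valid E, of 0] \<delta>(2)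
    unfolding \<delta>_def by (simp add: mult.commute)
  define X where "X = 2 * OPT * (real n)\<^sup>2 / real N"
  have "0 \<le> c * F (s 0)"
    using c multilinear_ext_nonneg[of "\<lambda>i j. 0"] by (simp add: s_def polytopeP_def)
  moreover have "real N * K = (c + 1) * X"
    using N by (simp add: K_def X_def \<delta>_def power2_eq_square)
  ultimately have "F E - (c + 1) * X \<le> (c + 1) * F (s N)"
    using telescoped by (simp add: algebra_simps)
  then have "(F E - (c + 1) * X) / (c + 1) \<le> F (s N)"
    using c by (simp add: pos_divide_le_eq mult.commute)
  moreover have "(F E - (c + 1) * X) / (c + 1) = F E / (c + 1) - X"
    using c by (simp add: diff_divide_distrib)
  ultimately show "F E / (c + 1) - 2 * OPT * (real n)\<^sup>2 / real N \<le> F (traj (1 / real N) v N)"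
    unfolding s_def \<delta>_def X_def by simp
qed

end

theorem mainTheorem4:
  fixes n k :: nat and f :: "(nat \<Rightarrow> nat set) \<Rightarrow> real" and c \<epsilon> :: real
  assumes "k \<ge> 2"
    and "\<forall>S\<in>orthants n k. f S \<ge> 0"
    and "k_submodular n k f"
    and "c > 0"
    and "\<epsilon> > 0"
  shows "\<exists>N0::nat. \<forall>N\<ge>N0. N > 0 \<longrightarrow>
           (\<forall>v :: nat \<Rightarrow> nat \<Rightarrow> nat \<Rightarrow> real.
              (\<forall>t<N. valid_direction n k (v t)
                 \<and> good_direction n k c
                     (\<lambda>i j. partial_ij (multilinear_ext n k f)
                              (traj (1 / real N) v t) i j) (v t))
              \<longrightarrow> traj (1 / real N) v N \<in> polytopeP n k
                \<and> multilinear_ext n k f (traj (1 / real N) v N)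
                    \<ge> Max (f ` orthants n k) / (c + 1) - \<epsilon>)"
proof -
  interpret nonneg_k_submodular n k f
    using assms(2,3) by unfold_locales
  obtain E where E: "full_point n k E" and OPT_le: "OPT \<le> F E"
    using exists_full_point_ge_OPT[OF assms(1)] by blast
  define N0 where "N0 = nat \<lceil>2 * OPT * (real n)\<^sup>2 / \<epsilon>\<rceil> + 1"
  show ?thesis
  proof (intro exI[of _ N0] allI impI)
    fix N :: nat and v assume N: "N0 \<le> N" "0 < N"
      and dirs: "\<forall>t<N. valid_direction n k (v t)
         \<and> good_direction n k c (\<lambda>i j. partial_ij F (traj (1 / real N) v t) i j) (v t)"
    have "2 * OPT * (real n)\<^sup>2 / \<epsilon> \<le> real N"
      using N unfolding N0_def by linarith
    then have "2 * OPT * (real n)\<^sup>2 / real N \<le> \<epsilon>"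
      using N assms(5) by (simp add: field_simps)
    moreover have "OPT / (c + 1) \<le> F E / (c + 1)"
      using OPT_le assms(4) by (simp add: divide_right_mono)
    moreover have "0 \<le> c" using assms(4) by simp
    ultimately show "traj (1 / real N) v N \<in> polytopeP n k \<and> OPT / (c + 1) - \<epsilon> \<le> F (traj (1 / real N) v N)"
      using traj_guarantee[OF _ N(2) E dirs] by (meson diff_mono order_trans)
  qed
qed

end
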